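(* Let $T$ be a rooted edge-weighted full binary tree with $n$ leaves, all root-to-leaf paths of weight $1$, every edge of weight at least $\tau\frac{\log n}{\sqrt{n}}$ for a sufficiently large constant $\tau$, whose topology is known, with experiment outcomes on all triples of leaves generated by the homogeneous noise model. Let $\mathsf{lc}_r$ be the left child of the root $r$. Then there is a procedure (Compute-light-tree) which, with high probability, computes $h_v$ for all vertices $v$ in the subtree rooted at $\mathsf{lc}_r$, each with additive error $\Theta(\sqrt{\log n/n})$.
   Context: Distances $d$ between leaves are path weights (an ultrametric). For each unordered triple of distinct leaves a single experiment $Q(a,b,c)$ returns one pair, independently across triples, with $\Pr[Q(a,b,c)=(a,b)]=\frac{d(a,c)+d(b,c)}{2(d(a,b)+d(b,c)+d(a,c))}$ (and symmetrically). For a vertex $v$, $h_v$ is the total weight of a path from $v$ to any leaf in its subtree, and $\mathsf{NL}(v)$ is the number of leaves in the subtree rooted at $v$. The children of every internal vertex are ordered as left child $\mathsf{lc}$ and right child $\mathsf{rc}$ with $\mathsf{NL}(\mathsf{rc})\ge\mathsf{NL}(\mathsf{lc})$. "With high probability" means probability $1-o(1)$ as $n\to\infty$. *)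

theory Defs
  imports "HOL-Probability.Probability" "HOL-Library.Sublist"
begin

text \<open>Topology of a rooted full binary tree with ordered children.
  Vertices are identified with their positions: the list of left (False) /
  right (True) turns from the root. The root is the empty list.\<close>

datatype topo = Lf | Nd topo topo

fun positions :: "topo \<Rightarrow> bool list set" where
  "positions Lf = {[]}"
| "positions (Nd l r) = {[]} \<union> (Cons False ` positions l) \<union> (Cons True ` positions r)"

fun leaves :: "topo \<Rightarrow> bool list set" where
  "leaves Lf = {[]}"
| "leaves (Nd l r) = (Cons False ` leaves l) \<union> (Cons True ` leaves r)"

fun nleaves :: "topo \<Rightarrow> nat" where
  "nleaves Lf = 1"
| "nleaves (Nd l r) = nleaves l + nleaves r"

fun ordered :: "topo \<Rightarrow> bool" where
  "ordered Lf = True"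
| "ordered (Nd l r) = (nleaves l \<le> nleaves r \<and> ordered l \<and> ordered r)"

text \<open>Edge weights: w p is the weight of the edge entering vertex p (p nonempty).
  pw w v u: weight of the path from vertex v down to vertex u (v a prefix of u).\<close>
definition pw :: "(bool list \<Rightarrow> real) \<Rightarrow> bool list \<Rightarrow> bool list \<Rightarrow> real" where
  "pw w v u = (\<Sum>i\<in>{length v<..length u}. w (take i u))"

definition hv :: "topo \<Rightarrow> (bool list \<Rightarrow> real) \<Rightarrow> bool list \<Rightarrow> real" where
  "hv t w v = pw w v (SOME u. u \<in> leaves t \<and> prefix v u)"

fun lcp :: "bool list \<Rightarrow> bool list \<Rightarrow> bool list" where
  "lcp (x # xs) (y # ys) = (if x = y then x # lcp xs ys else [])"
| "lcp _ _ = []"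

text \<open>Distance between leaves = weight of the path between them (through their lca).\<close>
definition ldist :: "(bool list \<Rightarrow> real) \<Rightarrow> bool list \<Rightarrow> bool list \<Rightarrow> real" where
  "ldist w a b = pw w (lcp a b) a + pw w (lcp a b) b"

text \<open>Homogeneous noise model on a triple S = {a,b,c}: the returned pair is S - {c}
  with probability (d(a,c)+d(b,c)) / (2 (d(a,b)+d(b,c)+d(a,c))).
  The denominator below is sum over ordered pairs, i.e. 2(d(a,b)+d(b,c)+d(a,c)).\<close>
definition excl_prob :: "(bool list \<Rightarrow> real) \<Rightarrow> bool list set \<Rightarrow> bool list \<Rightarrow> real" where
  "excl_prob w S c =
     (if c \<in> S then (\<Sum>x\<in>S - {c}. ldist w x c) / (\<Sum>x\<in>S. \<Sum>y\<in>S - {x}. ldist w x y) else 0)"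

definition triple_pmf :: "(bool list \<Rightarrow> real) \<Rightarrow> bool list set \<Rightarrow> bool list set pmf" where
  "triple_pmf w S = map_pmf (\<lambda>c. S - {c}) (embed_pmf (excl_prob w S))"

definition triples :: "topo \<Rightarrow> bool list set set" where
  "triples t = {S. S \<subseteq> leaves t \<and> card S = 3}"

text \<open>Joint distribution of all experiment outcomes, independent across triples.
  An outcome is a function mapping each triple of leaves to the returned pair.\<close>
definition outcomes :: "topo \<Rightarrow> (bool list \<Rightarrow> real) \<Rightarrow> (bool list set \<Rightarrow> bool list set) pmf" where
  "outcomes t w = Pi_pmf (triples t) {} (triple_pmf w)"

end

theory Submission
  imports Defs "HOL-Real_Asymp.Real_Asymp"
begin

(*
  Let v be an internal vertex below the left child of the root, a a leaf below the left child
  of v and b a leaf below its right child.  For every leaf c below the right child of the root,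
  d(a,c) = d(b,c) = 2 and d(a,b) = 2 h_v, so the experiment on {a,b,c} returns {a,b} with
  probability 1/(h_v + 2), independently over c.  As the tree is ordered there are m >= n/2
  such leaves c, so by Hoeffding's inequality the observed frequency of {a,b} is within
  2 sqrt(ln n / n) of 1/(h_v + 2) except with probability 2/n^4.  Since 1/(h_v + 2) lies in
  [1/3, 1/2], inverting the frequency costs a factor 12, and a union bound over the fewer than
  2n vertices gives the claim with C = 24.  The lower bound on the edge weights is only needed
  through their nonnegativity.
*)

section \<open>Tree combinatorics\<close>

lemma finite_positions: "finite (positions t)"
  by (induction t) auto

lemma finite_leaves: "finite (leaves t)"
  by (induction t) auto

lemma leaves_subset_positions: "leaves t \<subseteq> positions t"
  by (induction t) auto

lemma leaves_nonempty: "leaves t \<noteq> {}"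
  by (induction t) auto

lemma nleaves_pos: "nleaves t \<ge> 1"
  by (induction t) auto

lemma card_leaves: "card (leaves t) = nleaves t"
proof (induction t)
  case (Nd l r)
  have "card (Cons False ` leaves l \<union> Cons True ` leaves r) = card (leaves l) + card (leaves r)"
    by (subst card_Un_disjoint) (auto simp: finite_leaves card_image)
  then show ?case using Nd by simp
qed simp

lemma card_positions: "card (positions t) = 2 * nleaves t - 1"
proof (induction t)
  case (Nd l r)
  let ?B = "Cons False ` positions l \<union> Cons True ` positions r"
  have "positions (Nd l r) = insert [] ?B" by auto
  moreover have "card ?B = card (positions l) + card (positions r)"
    by (subst card_Un_disjoint) (auto simp: finite_positions card_image)
  moreover have "[] \<notin> ?B" "finite ?B" by (auto simp: finite_positions)
  ultimately show ?case
    using Nd nleaves_pos[of l] nleaves_pos[of r] by simp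
qed simp

lemma positions_prefix_closed: "u \<in> positions t \<Longrightarrow> prefix p u \<Longrightarrow> p \<in> positions t"
proof (induction t arbitrary: u p)
  case (Nd l r)
  show ?case
  proof (cases p)
    case (Cons x p')
    with Nd.prems obtain u' where "u = x # u'" "prefix p' u'"
      by (cases u) auto
    with Nd Cons show ?thesis by (cases x) auto
  qed simp
qed simp

lemma leaf_below: "p \<in> positions t \<Longrightarrow> \<exists>u\<in>leaves t. prefix p u"
proof (induction t arbitrary: p)
  case (Nd l r)
  show ?case
  proof (cases p)
    case Nil
    then show ?thesis using leaves_nonempty[of l] by auto
  next
    case (Cons x p')
    with Nd.prems have "p' \<in> (if x then positions r else positions l)" by auto
    then obtain u where "u \<in> (if x then leaves r else leaves l)" "prefix p' u"
      using Nd.IH by (cases x) auto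
    then show ?thesis
      using Cons by (intro bexI[of _ "x # u"]) (auto simp: image_iff split: if_splits)
  qed
qed simp

lemma leaf_prefix_eq: "v \<in> leaves t \<Longrightarrow> u \<in> positions t \<Longrightarrow> prefix v u \<Longrightarrow> u = v"
proof (induction t arbitrary: u v)
  case (Nd l r)
  then show ?case
    by (cases u) auto
qed simp

lemma child_in_positions: "v \<in> positions t \<Longrightarrow> v \<notin> leaves t \<Longrightarrow> v @ [x] \<in> positions t"
proof (induction t arbitrary: v)
  case (Nd l r)
  show ?case
  proof (cases v)
    case Nil
    have "[] \<in> positions l" "[] \<in> positions r" by (cases l; simp) (cases r; simp)
    then show ?thesis using Nil by (cases x) auto
  next
    case (Cons y v')
    with Nd.prems Nd.IH show ?thesis by (cases y) (auto simp: image_iff)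
  qed
qed simp

definition some_leaf :: "topo \<Rightarrow> bool list \<Rightarrow> bool list" where
  "some_leaf t p = (SOME u. u \<in> leaves t \<and> prefix p u)"

lemma some_leaf:
  assumes "p \<in> positions t"
  shows "some_leaf t p \<in> leaves t \<and> prefix p (some_leaf t p)"
proof -
  have "\<exists>u. u \<in> leaves t \<and> prefix p u" using leaf_below[OF assms] by blast
  then show ?thesis unfolding some_leaf_def by (rule someI_ex)
qed

section \<open>Path weights\<close>

lemma pw_split:
  assumes "prefix p v" "prefix v u"
  shows "pw w p u = pw w p v + pw w v u"
proof -
  have "length p \<le> length v" "length v \<le> length u"
    using assms by (auto dest: prefix_length_le)
  then have split: "{length p<..length u} = {length p<..length v} \<union> {length v<..length u}"
    by auto
  have "pw w p u = (\<Sum>i\<in>{length p<..length v}. w (take i u)) + pw w v u"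
    unfolding pw_def split by (rule sum.union_disjoint) auto
  moreover have "(\<Sum>i\<in>{length p<..length v}. w (take i u)) = pw w p v"
    unfolding pw_def using assms(2) by (intro sum.cong refl) (auto simp: prefix_def)
  ultimately show ?thesis by simp
qed

lemma pw_nonneg:
  assumes "u \<in> positions t" "\<forall>p\<in>positions t - {[]}. w p \<ge> 0"
  shows "pw w v u \<ge> 0"
  unfolding pw_def
proof (rule sum_nonneg)
  fix i assume "i \<in> {length v<..length u}"
  then have "take i u \<in> positions t - {[]}"
    using positions_prefix_closed[OF assms(1) take_is_prefix] by auto
  then show "w (take i u) \<ge> 0" using assms(2) by blast
qed

lemma hv_some_leaf: "hv t w v = pw w v (some_leaf t v)"
  unfolding hv_def some_leaf_def ..

lemma hv_leaf:
  assumes "v \<in> leaves t"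
  shows "hv t w v = 0"
proof -
  have "v \<in> positions t" using assms leaves_subset_positions by blast
  then have "some_leaf t v = v"
    using leaf_prefix_eq[OF assms, of "some_leaf t v"] some_leaf leaves_subset_positions by blast
  then show ?thesis by (simp add: hv_some_leaf pw_def)
qed

lemma pw_eq_hv:
  assumes ultra: "\<forall>u\<in>leaves t. pw w [] u = 1" and u: "u \<in> leaves t" "prefix v u"
  shows "pw w v u = hv t w v"
proof -
  have "v \<in> positions t"
    using positions_prefix_closed[OF _ u(2)] u(1) leaves_subset_positions by blast
  then have u': "some_leaf t v \<in> leaves t" "prefix v (some_leaf t v)"
    using some_leaf by blast+
  have "pw w [] v + pw w v u = pw w [] u"
    using pw_split[of "[]" v u] u(2) by simp
  also have "\<dots> = pw w [] (some_leaf t v)"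
    using ultra u(1) u'(1) by simp
  also have "\<dots> = pw w [] v + pw w v (some_leaf t v)"
    using pw_split[of "[]" v "some_leaf t v"] u'(2) by simp
  finally show ?thesis by (simp add: hv_some_leaf)
qed

lemma hv_root:
  assumes ultra: "\<forall>u\<in>leaves t. pw w [] u = 1"
  shows "hv t w [] = 1"
proof -
  obtain u where u: "u \<in> leaves t" using leaves_nonempty by blast
  then have "pw w [] u = hv t w []" by (intro pw_eq_hv[OF ultra]) simp_all
  then show ?thesis using ultra u by simp
qed

lemma hv_bounds:
  assumes wpos: "\<forall>p\<in>positions t - {[]}. w p \<ge> 0"
    and ultra: "\<forall>u\<in>leaves t. pw w [] u = 1" and v: "v \<in> positions t"
  shows "0 \<le> hv t w v" "hv t w v \<le> 1"
proof -
  have u: "some_leaf t v \<in> positions t" "prefix v (some_leaf t v)"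
    using some_leaf[OF v] leaves_subset_positions by blast+
  show "0 \<le> hv t w v"
    unfolding hv_some_leaf using pw_nonneg[OF u(1) wpos] .
  have "pw w [] v + hv t w v = pw w [] (some_leaf t v)"
    using pw_split[of "[]" v "some_leaf t v" w] some_leaf[OF v] by (simp add: hv_some_leaf)
  also have "\<dots> = 1"
    using ultra some_leaf[OF v] by simp
  finally have "pw w [] v + hv t w v = 1" .
  then show "hv t w v \<le> 1"
    using pw_nonneg[OF v wpos, of "[]"] by simp
qed

lemma lcp_sym: "lcp a b = lcp b a"
  by (induction a b rule: lcp.induct) auto

lemma ldist_sym: "ldist w a b = ldist w b a"
  unfolding ldist_def by (simp add: lcp_sym)

lemma lcp_append_Cons: "x \<noteq> y \<Longrightarrow> lcp (v @ x # xs) (v @ y # ys) = v"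
  by (induction v) auto

lemma ldist_eq_2hv:
  assumes ultra: "\<forall>u\<in>leaves t. pw w [] u = 1"
    and a: "a \<in> leaves t" "prefix (v @ [x]) a" and b: "b \<in> leaves t" "prefix (v @ [y]) b"
    and "x \<noteq> y"
  shows "ldist w a b = 2 * hv t w v"
proof -
  obtain xs ys where "a = v @ x # xs" "b = v @ y # ys"
    using a(2) b(2) by (auto simp: prefix_def)
  with \<open>x \<noteq> y\<close> have "lcp a b = v" "prefix v a" "prefix v b"
    by (simp_all add: lcp_append_Cons)
  then show ?thesis
    unfolding ldist_def using pw_eq_hv[OF ultra] a(1) b(1) by simp
qed

section \<open>Counting Bernoulli outcomes in a product distribution\<close>

lemma map_pmf_eq_bernoulli_pmf: "map_pmf (\<lambda>x. x = y) p = bernoulli_pmf (pmf p y)"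
proof (rule pmf_eqI)
  fix b :: bool
  have "pmf (map_pmf (\<lambda>x. x = y) p) True = pmf p y"
    by (simp add: pmf_map measure_pmf_single vimage_def)
  then show "pmf (map_pmf (\<lambda>x. x = y) p) b = pmf (bernoulli_pmf (pmf p y)) b"
    by (cases b) (simp_all add: pmf_le_1 pmf_False_conv_True[of "map_pmf _ _"])
qed

lemma Pi_pmf_count_binomial:
  assumes "finite I" "F \<subseteq> I" "p \<in> {0..1}"
    and bern: "\<And>S. S \<in> F \<Longrightarrow> map_pmf P (M S) = bernoulli_pmf p"
  shows "map_pmf (\<lambda>Q. card {S \<in> F. P (Q S)}) (Pi_pmf I d M) = binomial_pmf (card F) p"
proof -
  have finF: "finite F" using assms(1,2) by (rule finite_subset[rotated])
  have "map_pmf (\<lambda>Q. card {S \<in> F. P (Q S)}) (Pi_pmf I d M)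
      = map_pmf (\<lambda>Q. card {S \<in> F. P (Q S)}) (Pi_pmf F d M)"
    by (simp add: Pi_pmf_subset[OF assms(1,2)] map_pmf_comp cong: conj_cong)
  also have "\<dots> = map_pmf (\<lambda>f. card {S \<in> F. f S}) (Pi_pmf F (P d) (\<lambda>S. map_pmf P (M S)))"
    by (simp add: Pi_pmf_map[OF finF] map_pmf_comp)
  also have "Pi_pmf F (P d) (\<lambda>S. map_pmf P (M S)) = Pi_pmf F (P d) (\<lambda>_. bernoulli_pmf p)"
    using bern by (intro Pi_pmf_cong) auto
  finally show ?thesis
    using binomial_pmf_altdef'[OF finF refl assms(3)] by simp
qed

section \<open>The noise model on a single triple\<close>

lemma pmf_embed_excl_prob:
  assumes "finite S" "\<And>x y. x \<in> S \<Longrightarrow> y \<in> S \<Longrightarrow> x \<noteq> y \<Longrightarrow> 0 \<le> ldist w x y"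
    and D: "0 < (\<Sum>x\<in>S. \<Sum>y\<in>S - {x}. ldist w x y)"
  shows "pmf (embed_pmf (excl_prob w S)) = excl_prob w S"
proof -
  let ?D = "\<Sum>x\<in>S. \<Sum>y\<in>S - {x}. ldist w x y"
  have nonneg: "0 \<le> excl_prob w S c" for c
    using assms by (auto simp: excl_prob_def intro!: divide_nonneg_pos sum_nonneg)
  have "(\<Sum>c\<in>S. excl_prob w S c) = (\<Sum>c\<in>S. \<Sum>x\<in>S - {c}. ldist w x c) / ?D"
    by (simp add: excl_prob_def sum_divide_distrib)
  also have "(\<Sum>c\<in>S. \<Sum>x\<in>S - {c}. ldist w x c) = ?D"
    by (intro sum.cong refl) (rule ldist_sym)
  finally have "(\<Sum>c\<in>S. excl_prob w S c) = 1"
    using D by simp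
  moreover have "(\<integral>\<^sup>+c. ennreal (excl_prob w S c) \<partial>count_space UNIV)
      = (\<Sum>c\<in>S. ennreal (excl_prob w S c))"
    using assms(1) by (rule nn_integral_count_space') (auto simp: excl_prob_def)
  moreover have "(\<Sum>c\<in>S. ennreal (excl_prob w S c)) = ennreal (\<Sum>c\<in>S. excl_prob w S c)"
    by (intro sum_ennreal nonneg)
  ultimately have "(\<integral>\<^sup>+c. ennreal (excl_prob w S c) \<partial>count_space UNIV) = 1"
    by simp
  from pmf_embed_pmf[of "excl_prob w S", OF nonneg this] show ?thesis
    by (intro ext)
qed

lemma pmf_triple_pmf_pair:
  assumes distinct: "a \<noteq> b" "a \<noteq> c" "b \<noteq> c"
    and nonneg: "0 \<le> ldist w a b" "0 \<le> ldist w a c" "0 \<le> ldist w b c"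
    and pos: "0 < ldist w a b + ldist w b c + ldist w a c"
  shows "pmf (triple_pmf w {a, b, c}) {a, b}
           = (ldist w a c + ldist w b c) / (2 * (ldist w a b + ldist w b c + ldist w a c))"
proof -
  let ?S = "{a, b, c}"
  have sym: "ldist w b a = ldist w a b" "ldist w c a = ldist w a c" "ldist w c b = ldist w b c"
    by (simp_all add: ldist_sym)
  have minus: "?S - {a} = {b, c}" "?S - {b} = {a, c}" "?S - {c} = {a, b}"
    using distinct by auto
  have D: "(\<Sum>x\<in>?S. \<Sum>y\<in>?S - {x}. ldist w x y) = 2 * (ldist w a b + ldist w b c + ldist w a c)"
    using distinct by (simp add: minus sym)
  have "pmf (embed_pmf (excl_prob w ?S)) = excl_prob w ?S"
  proof (rule pmf_embed_excl_prob)
    fix x y assume "x \<in> ?S" "y \<in> ?S" "x \<noteq> y"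
    then show "0 \<le> ldist w x y" using nonneg sym by auto
  qed (use pos D in simp_all)
  moreover have "(\<lambda>x. ?S - {x}) -` {{a, b}} = {c}"
  proof -
    have "?S - {x} \<noteq> {a, b}" if "x \<noteq> c" for x
    proof -
      have "c \<in> ?S - {x}" using that by simp
      moreover have "c \<notin> {a, b}" using distinct by simp
      ultimately show ?thesis by blast
    qed
    with minus(3) show ?thesis by auto
  qed
  ultimately have "pmf (triple_pmf w ?S) {a, b} = excl_prob w ?S c"
    by (simp add: triple_pmf_def pmf_map measure_pmf_single)
  also have "\<dots> = (ldist w a c + ldist w b c) / (2 * (ldist w a b + ldist w b c + ldist w a c))"
    unfolding excl_prob_def D using distinct by (simp add: minus sym)
  finally show ?thesis .
qed

section \<open>The estimator\<close>

definition right_leaves :: "topo \<Rightarrow> bool list set" where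
  "right_leaves t = {u \<in> leaves t. prefix [True] u}"

definition probe_triples :: "topo \<Rightarrow> bool list \<Rightarrow> bool list set set" where
  "probe_triples t v =
     (\<lambda>c. {some_leaf t (v @ [False]), some_leaf t (v @ [True]), c}) ` right_leaves t"

definition pair_count :: "topo \<Rightarrow> bool list \<Rightarrow> (bool list set \<Rightarrow> bool list set) \<Rightarrow> nat" where
  "pair_count t v Q =
     card {S \<in> probe_triples t v. Q S = {some_leaf t (v @ [False]), some_leaf t (v @ [True])}}"

text \<open>The pair below v is returned with frequency pair_count / card right_leaves, whose mean
  is 1 / (h_v + 2); inverting it gives the estimate.\<close>
definition height_estimate :: "topo \<Rightarrow> (bool list set \<Rightarrow> bool list set) \<Rightarrow> bool list \<Rightarrow> real" where
  "height_estimate t Q v =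
     (if v \<in> leaves t then 0 else real (card (right_leaves t)) / real (pair_count t v Q) - 2)"

lemma finite_triples: "finite (triples t)"
proof (rule finite_subset)
  show "triples t \<subseteq> Pow (leaves t)" unfolding triples_def by auto
qed (simp add: finite_leaves)

lemma nleaves_le_card_right_leaves:
  assumes "ordered t" "2 \<le> nleaves t"
  shows "nleaves t \<le> 2 * card (right_leaves t)"
proof (cases t)
  case (Nd l r)
  have "right_leaves t = Cons True ` leaves r"
    unfolding right_leaves_def Nd by (auto simp: prefix_def)
  then have "card (right_leaves t) = nleaves r"
    by (simp add: card_image card_leaves)
  then show ?thesis using assms(1) Nd by simp
qed (use assms in simp)

lemma probe_distances:
  assumes ultra: "\<forall>u\<in>leaves t. pw w [] u = 1"
    and v: "v \<in> positions t" "prefix [False] v" "v \<notin> leaves t" and c: "c \<in> right_leaves t"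
  defines "a \<equiv> some_leaf t (v @ [False])" and "b \<equiv> some_leaf t (v @ [True])"
  shows "{a, b, c} \<subseteq> leaves t" "a \<noteq> b" "a \<noteq> c" "b \<noteq> c"
    and "ldist w a b = 2 * hv t w v" "ldist w a c = 2" "ldist w b c = 2"
proof -
  have a: "a \<in> leaves t" "prefix (v @ [False]) a" and b: "b \<in> leaves t" "prefix (v @ [True]) b"
    using some_leaf[OF child_in_positions[OF v(1,3)]] unfolding a_def b_def by blast+
  obtain v' where v': "v = False # v'"
    using v(2) by (auto simp: prefix_def)
  obtain xs ys where xs: "a = v @ False # xs" and ys: "b = v @ True # ys"
    using a(2) b(2) by (auto simp: prefix_def)
  obtain cs where cs: "c = True # cs" and c': "c \<in> leaves t"
    using c unfolding right_leaves_def by (auto simp: prefix_def)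
  show "{a, b, c} \<subseteq> leaves t" using a(1) b(1) c' by simp
  show "a \<noteq> b" "a \<noteq> c" "b \<noteq> c" unfolding xs ys cs v' by simp_all
  show "ldist w a b = 2 * hv t w v"
    using ldist_eq_2hv[OF ultra a b] by simp
  have root_sides: "prefix ([] @ [False]) a" "prefix ([] @ [False]) b" "prefix ([] @ [True]) c"
    unfolding xs ys cs v' by simp_all
  show "ldist w a c = 2" "ldist w b c = 2"
    using ldist_eq_2hv[OF ultra a(1) root_sides(1) c' root_sides(3)]
      ldist_eq_2hv[OF ultra b(1) root_sides(2) c' root_sides(3)] hv_root[OF ultra]
    by simp_all
qed

lemma probe_triple_bernoulli:
  assumes wpos: "\<forall>p\<in>positions t - {[]}. w p \<ge> 0" and ultra: "\<forall>u\<in>leaves t. pw w [] u = 1"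
    and v: "v \<in> positions t" "prefix [False] v" "v \<notin> leaves t" and c: "c \<in> right_leaves t"
  defines "a \<equiv> some_leaf t (v @ [False])" and "b \<equiv> some_leaf t (v @ [True])"
  shows "map_pmf (\<lambda>R. R = {a, b}) (triple_pmf w {a, b, c}) = bernoulli_pmf (1 / (hv t w v + 2))"
proof -
  note d = probe_distances[OF ultra v c, folded a_def b_def]
  have H: "0 \<le> hv t w v" using hv_bounds[OF wpos ultra v(1)] by simp
  have "pmf (triple_pmf w {a, b, c}) {a, b}
      = (ldist w a c + ldist w b c) / (2 * (ldist w a b + ldist w b c + ldist w a c))"
    by (rule pmf_triple_pmf_pair) (use d(2-7) H in simp_all)
  also have "\<dots> = 1 / (hv t w v + 2)"
    unfolding d(5-7) using H by (simp add: field_simps)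
  finally show ?thesis
    by (simp add: map_pmf_eq_bernoulli_pmf)
qed

lemma pair_count_binomial:
  assumes wpos: "\<forall>p\<in>positions t - {[]}. w p \<ge> 0" and ultra: "\<forall>u\<in>leaves t. pw w [] u = 1"
    and v: "v \<in> positions t" "prefix [False] v" "v \<notin> leaves t"
  shows "map_pmf (pair_count t v) (outcomes t w)
           = binomial_pmf (card (right_leaves t)) (1 / (hv t w v + 2))"
proof -
  define a where "a = some_leaf t (v @ [False])"
  define b where "b = some_leaf t (v @ [True])"
  have probes: "probe_triples t v = (\<lambda>c. {a, b, c}) ` right_leaves t"
    unfolding probe_triples_def a_def b_def ..
  have sub: "probe_triples t v \<subseteq> triples t"
  proof
    fix S assume "S \<in> probe_triples t v"
    then obtain c where c: "c \<in> right_leaves t" "S = {a, b, c}" unfolding probes by blast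
    then show "S \<in> triples t"
      using probe_distances[OF ultra v c(1), folded a_def b_def] unfolding triples_def by simp
  qed
  have "inj_on (\<lambda>c. {a, b, c}) (right_leaves t)"
  proof (rule inj_onI)
    fix c c' assume c: "c \<in> right_leaves t" "c' \<in> right_leaves t" "{a, b, c} = {a, b, c'}"
    then have "c \<in> {a, b, c'}" by blast
    then show "c = c'"
      using probe_distances(3,4)[OF ultra v c(1), folded a_def b_def] by blast
  qed
  then have card: "card (probe_triples t v) = card (right_leaves t)"
    unfolding probes by (rule card_image)
  have count: "pair_count t v = (\<lambda>Q. card {S \<in> probe_triples t v. Q S = {a, b}})"
    unfolding pair_count_def a_def b_def ..
  have "map_pmf (\<lambda>Q. card {S \<in> probe_triples t v. Q S = {a, b}}) (outcomes t w)
      = binomial_pmf (card (probe_triples t v)) (1 / (hv t w v + 2))"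
    unfolding outcomes_def
  proof (rule Pi_pmf_count_binomial[OF finite_triples sub])
    show "1 / (hv t w v + 2) \<in> {0..1}"
      using hv_bounds[OF wpos ultra v(1)] by simp
    fix S assume "S \<in> probe_triples t v"
    then obtain c where c: "c \<in> right_leaves t" "S = {a, b, c}" unfolding probes by blast
    then show "map_pmf (\<lambda>R. R = {a, b}) (triple_pmf w S) = bernoulli_pmf (1 / (hv t w v + 2))"
      using probe_triple_bernoulli[OF wpos ultra v c(1), folded a_def b_def] by simp
  qed
  then show ?thesis
    unfolding count card .
qed

lemma pair_count_deviation:
  assumes wpos: "\<forall>p\<in>positions t - {[]}. w p \<ge> 0" and ultra: "\<forall>u\<in>leaves t. pw w [] u = 1"
    and v: "v \<in> positions t" "prefix [False] v" "v \<notin> leaves t"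
    and m: "card (right_leaves t) > 0" and "0 \<le> (\<delta>::real)"
  shows "measure_pmf.prob (outcomes t w)
           {Q. \<delta> \<le> \<bar>real (pair_count t v Q) / card (right_leaves t) - 1 / (hv t w v + 2)\<bar>}
         \<le> 2 * exp (- 2 * real (card (right_leaves t)) * \<delta>\<^sup>2)"
proof -
  let ?m = "card (right_leaves t)" and ?p = "1 / (hv t w v + 2)"
  have "binomial_distribution ?p"
    unfolding binomial_distribution_def using hv_bounds[OF wpos ultra v(1)] by simp
  from binomial_distribution.prob_abs_ge'[OF this m \<open>0 \<le> \<delta>\<close>]
  have "measure_pmf.prob (binomial_pmf ?m ?p) {k. \<delta> \<le> \<bar>real k / ?m - ?p\<bar>}
      \<le> 2 * exp (- 2 * real ?m * \<delta>\<^sup>2)"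
    by simp
  then show ?thesis
    by (simp add: pair_count_binomial[OF wpos ultra v, symmetric] vimage_def)
qed

lemma inverse_estimate_error:
  fixes h q \<delta> :: real
  assumes h: "0 \<le> h" "h \<le> 1" and close: "\<bar>q - 1 / (h + 2)\<bar> < \<delta>" and "\<delta> \<le> 1 / 12"
  shows "\<bar>1 / q - 2 - h\<bar> \<le> 12 * \<delta>"
proof -
  define p where "p = 1 / (h + 2)"
  have p: "1 / 3 \<le> p" "p \<le> 1 / 2"
    using h unfolding p_def by (simp_all add: field_simps)
  have q: "1 / 4 \<le> q"
    using close p(1) assms(4) unfolding p_def[symmetric] by linarith
  have "(1 / 4) * (1 / 3) \<le> q * p"
    by (rule mult_mono) (use q p in auto)
  then have "1 / 12 \<le> q * p" by simp
  have "1 / q - 2 - h = 1 / q - 1 / p"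
    unfolding p_def by simp
  also have "\<dots> = (p - q) / (q * p)"
    using q p by (simp add: field_simps)
  finally have "1 / q - 2 - h = (p - q) / (q * p)" .
  then have "\<bar>1 / q - 2 - h\<bar> = \<bar>p - q\<bar> / (q * p)"
    using q p by (simp add: abs_mult)
  also have "\<dots> \<le> \<delta> / (1 / 12)"
    using close \<open>1 / 12 \<le> q * p\<close> unfolding p_def[symmetric]
    by (intro frac_le) (simp_all add: abs_minus_commute)
  finally show ?thesis by simp
qed

lemma height_estimate_accurate:
  assumes wpos: "\<forall>p\<in>positions t - {[]}. w p \<ge> 0" and ultra: "\<forall>u\<in>leaves t. pw w [] u = 1"
    and "\<delta> \<le> 1 / 12" "0 \<le> \<delta>"
    and close: "\<forall>v\<in>positions t. prefix [False] v \<and> v \<notin> leaves t \<longrightarrow>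
      \<bar>real (pair_count t v Q) / card (right_leaves t) - 1 / (hv t w v + 2)\<bar> < \<delta>"
    and v: "v \<in> positions t" "prefix [False] v"
  shows "\<bar>height_estimate t Q v - hv t w v\<bar> \<le> 12 * \<delta>"
proof (cases "v \<in> leaves t")
  case True
  then show ?thesis
    using \<open>0 \<le> \<delta>\<close> by (simp add: height_estimate_def hv_leaf)
next
  case False
  then have "\<bar>1 / (real (pair_count t v Q) / card (right_leaves t)) - 2 - hv t w v\<bar> \<le> 12 * \<delta>"
    using close v hv_bounds[OF wpos ultra v(1)] \<open>\<delta> \<le> 1 / 12\<close>
    by (intro inverse_estimate_error) auto
  with False show ?thesis
    by (simp add: height_estimate_def)
qed

lemma height_estimate_uniform_error:
  fixes \<delta> :: real
  assumes "ordered t" "2 \<le> nleaves t"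
    and wpos: "\<forall>p\<in>positions t - {[]}. w p \<ge> 0" and ultra: "\<forall>u\<in>leaves t. pw w [] u = 1"
    and "0 \<le> \<delta>" "\<delta> \<le> 1 / 12"
  shows "1 - 4 * real (nleaves t) * exp (- real (nleaves t) * \<delta>\<^sup>2)
    \<le> measure_pmf.prob (outcomes t w)
         {Q. \<forall>v\<in>positions t. prefix [False] v \<longrightarrow> \<bar>height_estimate t Q v - hv t w v\<bar> \<le> 12 * \<delta>}"
    (is "_ \<le> measure_pmf.prob _ ?good")
proof -
  let ?P = "measure_pmf.prob (outcomes t w)"
  let ?n = "nleaves t" and ?m = "card (right_leaves t)" and ?e = "exp (- real (nleaves t) * \<delta>\<^sup>2)"
  define V where "V = {v \<in> positions t. prefix [False] v \<and> v \<notin> leaves t}"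
  define B where "B v = {Q. \<delta> \<le> \<bar>real (pair_count t v Q) / ?m - 1 / (hv t w v + 2)\<bar>}" for v
  have m: "real ?n \<le> 2 * ?m" "?m > 0"
    using nleaves_le_card_right_leaves[OF assms(1,2)] assms(2) by linarith+
  have "V \<subseteq> positions t" unfolding V_def by blast
  then have "finite V" "card V \<le> card (positions t)"
    using finite_positions by (auto intro: finite_subset card_mono)
  then have card_V: "real (card V) \<le> 2 * real ?n"
    using card_positions[of t] by linarith
  have B_bound: "?P (B v) \<le> 2 * ?e" if "v \<in> V" for v
  proof -
    have "?P (B v) \<le> 2 * exp (- 2 * real ?m * \<delta>\<^sup>2)"
      unfolding B_def using that V_def pair_count_deviation[OF wpos ultra _ _ _ m(2) \<open>0 \<le> \<delta>\<close>]
      by blast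
    also have "\<dots> \<le> 2 * ?e"
      using m(1) by (simp add: mult_right_mono)
    finally show ?thesis .
  qed
  have "?P (\<Union>v\<in>V. B v) \<le> (\<Sum>v\<in>V. ?P (B v))"
    by (rule measure_pmf.finite_measure_subadditive_finite[OF \<open>finite V\<close>]) simp
  also have "\<dots> \<le> real (card V) * (2 * ?e)"
    using B_bound by (rule sum_bounded_above)
  also have "\<dots> \<le> 4 * real ?n * ?e"
    using mult_right_mono[OF card_V, of "2 * ?e"] by simp
  finally have "1 - 4 * real ?n * ?e \<le> ?P (UNIV - (\<Union>v\<in>V. B v))"
    using measure_pmf.prob_compl[of "\<Union>v\<in>V. B v" "outcomes t w"] by simp
  also have "\<dots> \<le> ?P ?good"
  proof (rule measure_pmf.finite_measure_mono)
    show "UNIV - (\<Union>v\<in>V. B v) \<subseteq> ?good"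
    proof (intro subsetI CollectI ballI impI)
      fix Q v assume Q: "Q \<in> UNIV - (\<Union>v\<in>V. B v)" and v: "v \<in> positions t" "prefix [False] v"
      from Q have "\<forall>v\<in>positions t. prefix [False] v \<and> v \<notin> leaves t \<longrightarrow>
          \<bar>real (pair_count t v Q) / ?m - 1 / (hv t w v + 2)\<bar> < \<delta>"
        unfolding V_def B_def by (auto simp: not_le)
      with v show "\<bar>height_estimate t Q v - hv t w v\<bar> \<le> 12 * \<delta>"
        using height_estimate_accurate[OF wpos ultra \<open>\<delta> \<le> 1 / 12\<close> \<open>0 \<le> \<delta>\<close>] by blast
    qed
  qed simp
  finally show ?thesis .
qed

lemma eventually_large_nleaves:
  fixes \<epsilon> :: real
  assumes "\<epsilon> > 0"
  shows "eventually (\<lambda>n::nat. 2 \<le> n \<and> ln n / n \<le> 1 / 576 \<and> 4 * real n * exp (- 4 * ln n) \<le> \<epsilon>)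
           sequentially"
proof -
  have "(\<lambda>n::nat. ln n / n) \<longlonglongrightarrow> 0"
    by real_asymp
  then have "eventually (\<lambda>n::nat. ln n / n < 1 / 576) sequentially"
    by (rule order_tendstoD(2)) simp
  moreover have "(\<lambda>n::nat. 4 * real n * exp (- 4 * ln n)) \<longlonglongrightarrow> 0"
    by real_asymp
  then have "eventually (\<lambda>n::nat. 4 * real n * exp (- 4 * ln n) < \<epsilon>) sequentially"
    by (rule order_tendstoD(2)) (rule assms)
  ultimately show ?thesis
    using eventually_ge_at_top[of 2] by eventually_elim auto
qed

lemma height_estimate_whp:
  fixes \<epsilon> \<tau> :: real
  assumes "\<epsilon> > 0" "\<tau> \<ge> 0"
  shows "\<exists>N::nat. \<forall>t w.
       nleaves t \<ge> N \<and> ordered t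
       \<and> (\<forall>p\<in>positions t - {[]}. w p \<ge> \<tau> * ln (real (nleaves t)) / sqrt (real (nleaves t)))
       \<and> (\<forall>u\<in>leaves t. pw w [] u = 1)
       \<longrightarrow> measure_pmf.prob (outcomes t w)
             {Q. \<forall>v\<in>positions t. prefix [False] v \<longrightarrow>
                   \<bar>height_estimate t Q v - hv t w v\<bar> \<le> 24 * sqrt (ln (real (nleaves t)) / real (nleaves t))}
           \<ge> 1 - \<epsilon>"
proof -
  obtain N where N: "\<And>n. N \<le> n \<Longrightarrow> 2 \<le> n \<and> ln n / n \<le> 1 / 576 \<and> 4 * real n * exp (- 4 * ln n) \<le> \<epsilon>"
    using eventually_large_nleaves[OF assms(1)] unfolding eventually_sequentially by blast
  show ?thesis
  proof (intro exI[of _ N] allI impI, elim conjE)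
    fix t w
    assume "N \<le> nleaves t" "ordered t"
      and lb: "\<forall>p\<in>positions t - {[]}. w p \<ge> \<tau> * ln (real (nleaves t)) / sqrt (real (nleaves t))"
      and ultra: "\<forall>u\<in>leaves t. pw w [] u = 1"
    define n where "n = nleaves t"
    have n: "2 \<le> n" "ln n / n \<le> 1 / 576" "4 * real n * exp (- 4 * ln n) \<le> \<epsilon>"
      using N \<open>N \<le> nleaves t\<close> unfolding n_def by blast+
    have "0 \<le> \<tau> * ln n / sqrt n"
      using n(1) assms(2) by simp
    then have wpos: "\<forall>p\<in>positions t - {[]}. w p \<ge> 0"
      using lb unfolding n_def by (fastforce intro: order_trans)
    define \<delta> where "\<delta> = 2 * sqrt (ln n / n)"
    have "0 \<le> ln n / n" using n(1) by simp
    then have "0 \<le> \<delta>" "n * \<delta>\<^sup>2 = 4 * ln n"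
      using n(1) unfolding \<delta>_def by (simp_all add: power_mult_distrib)
    have "sqrt (ln n / n) \<le> sqrt ((1 / 24)\<^sup>2)"
      using n(2) by (intro real_sqrt_le_mono) (simp add: power2_eq_square)
    then have "\<delta> \<le> 1 / 12" unfolding \<delta>_def by simp
    from height_estimate_uniform_error[OF \<open>ordered t\<close> _ wpos ultra \<open>0 \<le> \<delta>\<close> this] n(1,3)
      \<open>n * \<delta>\<^sup>2 = 4 * ln n\<close>
    show "1 - \<epsilon> \<le> measure_pmf.prob (outcomes t w)
          {Q. \<forall>v\<in>positions t. prefix [False] v \<longrightarrow>
             \<bar>height_estimate t Q v - hv t w v\<bar> \<le> 24 * sqrt (ln (nleaves t) / nleaves t)}"
      unfolding n_def \<delta>_def by simp
  qed
qed

theorem lemma5: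
  "\<exists>(\<tau>::real) > 0. \<exists>(C::real) > 0.
     \<exists>est :: topo \<Rightarrow> (bool list set \<Rightarrow> bool list set) \<Rightarrow> bool list \<Rightarrow> real.
     \<forall>\<epsilon>::real > 0. \<exists>N::nat. \<forall>t w.
       nleaves t \<ge> N \<and> ordered t
       \<and> (\<forall>p\<in>positions t - {[]}. w p \<ge> \<tau> * ln (real (nleaves t)) / sqrt (real (nleaves t)))
       \<and> (\<forall>u\<in>leaves t. pw w [] u = 1)
       \<longrightarrow> measure_pmf.prob (outcomes t w)
             {Q. \<forall>v\<in>positions t. prefix [False] v \<longrightarrow>
                   \<bar>est t Q v - hv t w v\<bar> \<le> C * sqrt (ln (real (nleaves t)) / real (nleaves t))}
           \<ge> 1 - \<epsilon>"
proof (rule exI[of _ 1], rule conjI, simp, rule exI[of _ 24], rule conjI, simp,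
    rule exI[of _ height_estimate], intro allI impI height_estimate_whp)
qed simp_all

end
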